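(* Let $x_1,\dots,x_N\in\mathbb{R}^d$ with binary labels $y_1,\dots,y_N\in\{0,1\}$, and suppose $N^+:=\sum_i y_i\ge 1$ and $N^-:=\sum_i(1-y_i)\ge 1$. For $\beta\in\mathbb{R}^d$ let $p_\beta(x)=[1+\exp(-\beta^\top x)]^{-1}$ and define the log-loss $$\ell(\beta)=-\sum_{i=1}^N\Big(y_i\ln p_\beta(x_i)+(1-y_i)\ln\big(1-p_\beta(x_i)\big)\Big).$$ Suppose $\beta\in\arg\min_{\beta'\in\mathbb{R}^d}\ell(\beta')$ (a minimizer exists), and let $c=\max_i|\beta^\top x_i|$. Let $\mu^+=\frac{1}{N^+}\sum_{i:y_i=1}x_i$ and $\mu^-=\frac{1}{N^-}\sum_{i:y_i=0}x_i$. Then $$C_1-\big(C_3\,\beta^\top\mu^+-C_4\,\beta^\top\mu^-\big)\;\le\;\ell(\beta)\;\le\; C_2-\big(C_3\,\beta^\top\mu^+-C_4\,\beta^\top\mu^-\big),$$ where $C_1=N\ln 2$, $C_2=N\ln(1+e^{c})-\frac{Nc}{2}$, $C_3=\frac{N^+}{2}$, $C_4=\frac{N^-}{2}$. *)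

theory Defs
  imports "HOL-Analysis.Analysis"
begin

definition sigmoid_prob :: "real ^ 'd \<Rightarrow> real ^ 'd \<Rightarrow> real" where
  "sigmoid_prob \<beta> x = 1 / (1 + exp (- (\<beta> \<bullet> x)))"

definition log_loss :: "nat \<Rightarrow> (nat \<Rightarrow> real ^ 'd) \<Rightarrow> (nat \<Rightarrow> real) \<Rightarrow> real ^ 'd \<Rightarrow> real" where
  "log_loss N x y \<beta> = - (\<Sum>i<N. y i * ln (sigmoid_prob \<beta> (x i))
                                 + (1 - y i) * ln (1 - sigmoid_prob \<beta> (x i)))"

end

theory Submission
  imports Defs
begin

text \<open>Splitting the softplus function \<open>ln (1 + exp t)\<close> into its odd part \<open>t/2\<close> and its even
  part \<open>ln (2 cosh (t/2))\<close> writes the loss of a sample with label \<open>y\<close> and margin \<open>t\<close> as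
  \<open>ln (2 cosh (t/2)) - (2y - 1) t/2\<close>. Summed over the samples, the odd parts give exactly the
  class-mean term of the bounds, and the even part lies between \<open>ln 2\<close> (at \<open>t = 0\<close>) and its
  value at \<open>c\<close>, by monotonicity of \<open>cosh\<close> in \<open>|t|\<close>.\<close>

lemma ln_one_plus_exp_eq: "ln (1 + exp (t::real)) = t / 2 + ln (2 * cosh (t / 2))"
proof -
  have "exp (t/2) * exp (t/2) = exp t" "exp (t/2) * exp (-(t/2)) = 1"
    by (simp_all add: exp_add[symmetric])
  then have "1 + exp t = exp (t/2) * (2 * cosh (t/2))"
    by (simp add: cosh_def algebra_simps)
  then show ?thesis
    by (simp add: ln_mult)
qed

lemma ln_sigmoid_prob: "ln (sigmoid_prob \<beta> x) = - ln (1 + exp (- (\<beta> \<bullet> x)))"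
  by (simp add: sigmoid_prob_def ln_div add_pos_pos)

lemma ln_one_minus_sigmoid_prob: "ln (1 - sigmoid_prob \<beta> x) = - ln (1 + exp (\<beta> \<bullet> x))"
proof -
  have "1 + exp (- (\<beta> \<bullet> x)) > 0" "1 + exp (\<beta> \<bullet> x) > 0"
    by (simp_all add: add_pos_pos)
  moreover have "exp (- (\<beta> \<bullet> x)) * exp (\<beta> \<bullet> x) = 1"
    by (simp add: exp_add[symmetric])
  ultimately have "1 - sigmoid_prob \<beta> x = 1 / (1 + exp (\<beta> \<bullet> x))"
    unfolding sigmoid_prob_def by (simp add: field_simps)
  then show ?thesis
    by (simp add: ln_div add_pos_pos)
qed

lemma sample_loss_eq:
  assumes "y \<in> {0, 1}"
  shows "- (y * ln (sigmoid_prob \<beta> x) + (1 - y) * ln (1 - sigmoid_prob \<beta> x))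
    = ln (2 * cosh ((\<beta> \<bullet> x) / 2)) - y * (\<beta> \<bullet> x) / 2 + (1 - y) * (\<beta> \<bullet> x) / 2"
  using assms ln_one_plus_exp_eq[of "\<beta> \<bullet> x"] ln_one_plus_exp_eq[of "- (\<beta> \<bullet> x)"]
  by (auto simp: ln_sigmoid_prob ln_one_minus_sigmoid_prob)

lemma log_loss_eq:
  assumes "\<forall>i<N. y i \<in> {0, 1}"
  shows "log_loss N x y \<beta> = (\<Sum>i<N. ln (2 * cosh ((\<beta> \<bullet> x i) / 2)))
    - ((\<Sum>i<N. y i * (\<beta> \<bullet> x i)) - (\<Sum>i<N. (1 - y i) * (\<beta> \<bullet> x i))) / 2"
proof -
  have "log_loss N x y \<beta> = (\<Sum>i<N. - (y i * ln (sigmoid_prob \<beta> (x i))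
                                 + (1 - y i) * ln (1 - sigmoid_prob \<beta> (x i))))"
    unfolding log_loss_def by (rule sum_negf[symmetric])
  also have "\<dots> = (\<Sum>i<N. ln (2 * cosh ((\<beta> \<bullet> x i) / 2))
                      - y i * (\<beta> \<bullet> x i) / 2 + (1 - y i) * (\<beta> \<bullet> x i) / 2)"
    using assms by (intro sum.cong refl sample_loss_eq) auto
  finally show ?thesis
    by (simp add: sum.distrib sum_subtractf sum_divide_distrib diff_divide_distrib)
qed

lemma ln_two_cosh_half_ge: "ln 2 \<le> ln (2 * cosh ((t::real) / 2))"
  using cosh_real_ge_1[of "t / 2"] by simp

lemma ln_two_cosh_half_mono:
  fixes t c :: real
  assumes "\<bar>t\<bar> \<le> c"
  shows "ln (2 * cosh (t / 2)) \<le> ln (2 * cosh (c / 2))"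
proof -
  have "cosh \<bar>t / 2\<bar> \<le> cosh (c / 2)"
    using assms by (subst cosh_real_nonneg_le_iff) auto
  then show ?thesis
    by (simp only: cosh_real_abs) simp
qed

lemma sum_label_one_eq:
  fixes y :: "'a \<Rightarrow> real" and f :: "'a \<Rightarrow> 'b::real_vector"
  assumes "finite A" and "\<forall>i\<in>A. y i \<in> {0, 1}"
  shows "(\<Sum>i\<in>{i\<in>A. y i = 1}. f i) = (\<Sum>i\<in>A. y i *\<^sub>R f i)"
proof -
  have "(\<Sum>i\<in>A. y i *\<^sub>R f i) = (\<Sum>i\<in>{i\<in>A. y i = 1}. y i *\<^sub>R f i)"
    using assms by (intro sum.mono_neutral_right) auto
  then show ?thesis
    by simp
qed

lemma scaled_class_mean_inner:
  fixes y :: "'a \<Rightarrow> real" and v :: "'a \<Rightarrow> 'b::real_inner"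
  assumes "finite A" and "\<forall>i\<in>A. y i \<in> {0, 1}" and "(\<Sum>i\<in>A. y i) \<noteq> 0"
  shows "(\<Sum>i\<in>A. y i) * (b \<bullet> ((1 / (\<Sum>i\<in>A. y i)) *\<^sub>R (\<Sum>i\<in>{i\<in>A. y i = 1}. v i)))
    = (\<Sum>i\<in>A. y i * (b \<bullet> v i))"
  using assms sum_label_one_eq[OF assms(1,2), of "\<lambda>i. b \<bullet> v i"]
  by (simp add: inner_sum_right)

theorem theorem2:
  fixes N :: nat and x :: "nat \<Rightarrow> real ^ 'd" and y :: "nat \<Rightarrow> real" and \<beta> :: "real ^ 'd"
  assumes labels: "\<forall>i<N. y i \<in> {0, 1}"
    and pos: "(\<Sum>i<N. y i) \<ge> 1"
    and neg: "(\<Sum>i<N. 1 - y i) \<ge> 1"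
    and argmin: "\<forall>\<beta>'. log_loss N x y \<beta> \<le> log_loss N x y \<beta>'"
  defines "Np \<equiv> (\<Sum>i<N. y i)"
    and "Nn \<equiv> (\<Sum>i<N. 1 - y i)"
    and "c \<equiv> Max ((\<lambda>i. \<bar>\<beta> \<bullet> x i\<bar>) ` {..<N})"
    and "\<mu>p \<equiv> ((1 / (\<Sum>i<N. y i)) *\<^sub>R (\<Sum>i\<in>{i. i < N \<and> y i = 1}. x i))"
    and "\<mu>n \<equiv> ((1 / (\<Sum>i<N. 1 - y i)) *\<^sub>R (\<Sum>i\<in>{i. i < N \<and> y i = 0}. x i))"
  shows "real N * ln 2 - (Np / 2 * (\<beta> \<bullet> \<mu>p) - Nn / 2 * (\<beta> \<bullet> \<mu>n))
           \<le> log_loss N x y \<beta>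
         \<and> log_loss N x y \<beta>
           \<le> real N * ln (1 + exp c) - real N * c / 2 - (Np / 2 * (\<beta> \<bullet> \<mu>p) - Nn / 2 * (\<beta> \<bullet> \<mu>n))"
proof -
  have neg_labels: "\<forall>i\<in>{..<N}. 1 - y i \<in> {0, 1}"
    using labels by auto
  have "Np * (\<beta> \<bullet> \<mu>p) = (\<Sum>i<N. y i * (\<beta> \<bullet> x i))"
    using scaled_class_mean_inner[of "{..<N}" y] labels pos by (simp add: Np_def \<mu>p_def)
  moreover have "Nn * (\<beta> \<bullet> \<mu>n) = (\<Sum>i<N. (1 - y i) * (\<beta> \<bullet> x i))"
    using scaled_class_mean_inner[OF _ neg_labels, of \<beta> x] neg by (simp add: Nn_def \<mu>n_def)
  ultimately have loss: "log_loss N x y \<beta>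
      = (\<Sum>i<N. ln (2 * cosh ((\<beta> \<bullet> x i) / 2))) - (Np / 2 * (\<beta> \<bullet> \<mu>p) - Nn / 2 * (\<beta> \<bullet> \<mu>n))"
    using log_loss_eq[OF labels] by (simp add: diff_divide_distrib)
  have "real N * ln 2 = (\<Sum>i<N. ln 2)"
    by simp
  also have "\<dots> \<le> (\<Sum>i<N. ln (2 * cosh ((\<beta> \<bullet> x i) / 2)))"
    by (intro sum_mono ln_two_cosh_half_ge)
  moreover have "\<bar>\<beta> \<bullet> x i\<bar> \<le> c" if "i < N" for i
    unfolding c_def using that by (intro Max_ge) auto
  then have "(\<Sum>i<N. ln (2 * cosh ((\<beta> \<bullet> x i) / 2))) \<le> real N * ln (2 * cosh (c / 2))"
    using sum_mono[of "{..<N}" _ "\<lambda>_. ln (2 * cosh (c / 2))"] ln_two_cosh_half_mono by simp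
  ultimately show ?thesis
    unfolding loss using ln_one_plus_exp_eq[of c] by (simp add: algebra_simps)
qed

end
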